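(* Let $\mathcal{A}$ be a unital C*-algebra and $X$ a Hilbert $\mathcal{A}$-bimodule, full and finite projective as a right $\mathcal{A}$-module, with finite basis $\{u_1,\dots,u_n\}$, and let $\sigma:\mathcal{O}_X\to\mathcal{O}_X$, $\sigma(T)=\sum_iu_iTu_i^*$. Then the restriction of $\sigma$ to $\mathcal{A}'\cap\mathcal{O}_X$ is a unital injective $*$-homomorphism, and this restriction does not depend on the choice of the basis of $X_{\mathcal{A}}$.
   Context: A Hilbert $\mathcal{A}$-bimodule is a right Hilbert $\mathcal{A}$-module $X$ (inner product $(\cdot|\cdot)_{\mathcal{A}}$) with an injective $*$-homomorphism $\phi:\mathcal{A}\to\mathcal{L}_{\mathcal{A}}(X_{\mathcal{A}})$. A basis is a finite set $\{u_i\}\subset X$ with $x=\sum_iu_i(u_i|x)_{\mathcal{A}}$ for all $x\in X$. $\mathcal{O}_X$ is the universal C*-algebra generated by a unital copy of $\mathcal{A}$ and elements $S_x$ ($x\in X$, linear in $x$) with $S_{xa}=S_xa$, $S_{\phi(a)x}=aS_x$, $S_x^*S_y=(x|y)_{\mathcal{A}}$, $\sum_iS_{u_i}S_{u_i}^*=I$; write $x$ for $S_x$. $\mathcal{A}'$ is the commutant of $\mathcal{A}$ in $\mathcal{O}_X$. *)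

theory Defs
  imports Complex_Main
begin

record 'a calg =
  ca_carrier :: "'a set"
  ca_zero :: 'a
  ca_one :: 'a
  ca_add :: "'a \<Rightarrow> 'a \<Rightarrow> 'a"
  ca_mult :: "'a \<Rightarrow> 'a \<Rightarrow> 'a"
  ca_smult :: "complex \<Rightarrow> 'a \<Rightarrow> 'a"
  ca_star :: "'a \<Rightarrow> 'a"
  ca_norm :: "'a \<Rightarrow> real"

definition ca_diff :: "'a calg \<Rightarrow> 'a \<Rightarrow> 'a \<Rightarrow> 'a" where
  "ca_diff C x y = ca_add C x (ca_smult C (-1) y)"

definition ca_sum :: "'a calg \<Rightarrow> 'a list \<Rightarrow> 'a" where
  "ca_sum C xs = foldr (ca_add C) xs (ca_zero C)"

definition unital_cstar_algebra :: "'a calg \<Rightarrow> bool" where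
  "unital_cstar_algebra C \<longleftrightarrow>
     (let K = ca_carrier C; add = ca_add C; mul = ca_mult C; sm = ca_smult C;
          st = ca_star C; nm = ca_norm C; z = ca_zero C; e = ca_one C in
     z \<in> K \<and> e \<in> K \<and>
     (\<forall>x\<in>K. \<forall>y\<in>K. add x y \<in> K \<and> mul x y \<in> K) \<and>
     (\<forall>c. \<forall>x\<in>K. sm c x \<in> K) \<and> (\<forall>x\<in>K. st x \<in> K) \<and>
     \<comment> \<open>complex vector space\<close>
     (\<forall>x\<in>K. \<forall>y\<in>K. \<forall>w\<in>K. add (add x y) w = add x (add y w)) \<and>
     (\<forall>x\<in>K. \<forall>y\<in>K. add x y = add y x) \<and>
     (\<forall>x\<in>K. add z x = x) \<and>
     (\<forall>x\<in>K. add x (sm (-1) x) = z) \<and>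
     (\<forall>c d. \<forall>x\<in>K. sm (c + d) x = add (sm c x) (sm d x)) \<and>
     (\<forall>c. \<forall>x\<in>K. \<forall>y\<in>K. sm c (add x y) = add (sm c x) (sm c y)) \<and>
     (\<forall>c d. \<forall>x\<in>K. sm (c * d) x = sm c (sm d x)) \<and>
     (\<forall>x\<in>K. sm 1 x = x) \<and>
     \<comment> \<open>associative unital algebra\<close>
     (\<forall>x\<in>K. \<forall>y\<in>K. \<forall>w\<in>K. mul (mul x y) w = mul x (mul y w)) \<and>
     (\<forall>x\<in>K. \<forall>y\<in>K. \<forall>w\<in>K. mul x (add y w) = add (mul x y) (mul x w)) \<and>
     (\<forall>x\<in>K. \<forall>y\<in>K. \<forall>w\<in>K. mul (add x y) w = add (mul x w) (mul y w)) \<and>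
     (\<forall>c. \<forall>x\<in>K. \<forall>y\<in>K. mul (sm c x) y = sm c (mul x y) \<and> mul x (sm c y) = sm c (mul x y)) \<and>
     (\<forall>x\<in>K. mul e x = x \<and> mul x e = x) \<and>
     \<comment> \<open>involution\<close>
     (\<forall>x\<in>K. st (st x) = x) \<and>
     (\<forall>x\<in>K. \<forall>y\<in>K. st (add x y) = add (st x) (st y)) \<and>
     (\<forall>c. \<forall>x\<in>K. st (sm c x) = sm (cnj c) (st x)) \<and>
     (\<forall>x\<in>K. \<forall>y\<in>K. st (mul x y) = mul (st y) (st x)) \<and>
     \<comment> \<open>submultiplicative norm, C*-identity\<close>
     (\<forall>x\<in>K. nm x \<ge> 0 \<and> (nm x = 0 \<longleftrightarrow> x = z)) \<and>
     (\<forall>x\<in>K. \<forall>y\<in>K. nm (add x y) \<le> nm x + nm y) \<and>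
     (\<forall>c. \<forall>x\<in>K. nm (sm c x) = cmod c * nm x) \<and>
     (\<forall>x\<in>K. \<forall>y\<in>K. nm (mul x y) \<le> nm x * nm y) \<and>
     (\<forall>x\<in>K. nm (mul (st x) x) = (nm x)\<^sup>2) \<and>
     \<comment> \<open>completeness\<close>
     (\<forall>f :: nat \<Rightarrow> _. (\<forall>n. f n \<in> K) \<and> (\<forall>\<epsilon>>0. \<exists>N. \<forall>m\<ge>N. \<forall>n\<ge>N. nm (ca_diff C (f m) (f n)) < \<epsilon>)
          \<longrightarrow> (\<exists>l\<in>K. \<forall>\<epsilon>>0. \<exists>N. \<forall>n\<ge>N. nm (ca_diff C (f n) l) < \<epsilon>)))"

record ('x, 'a) hmod =
  hm_carrier :: "'x set"
  hm_zero :: 'x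
  hm_add :: "'x \<Rightarrow> 'x \<Rightarrow> 'x"
  hm_smult :: "complex \<Rightarrow> 'x \<Rightarrow> 'x"
  hm_ract :: "'x \<Rightarrow> 'a \<Rightarrow> 'x"
  hm_ip :: "'x \<Rightarrow> 'x \<Rightarrow> 'a"

definition hm_diff :: "('x, 'a) hmod \<Rightarrow> 'x \<Rightarrow> 'x \<Rightarrow> 'x" where
  "hm_diff X x y = hm_add X x (hm_smult X (-1) y)"

definition hm_sum :: "('x, 'a) hmod \<Rightarrow> 'x list \<Rightarrow> 'x" where
  "hm_sum X xs = foldr (hm_add X) xs (hm_zero X)"

definition hm_norm :: "'a calg \<Rightarrow> ('x, 'a) hmod \<Rightarrow> 'x \<Rightarrow> real" where
  "hm_norm A X x = sqrt (ca_norm A (hm_ip X x x))"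

definition right_hilbert_module :: "'a calg \<Rightarrow> ('x, 'a) hmod \<Rightarrow> bool" where
  "right_hilbert_module A X \<longleftrightarrow> unital_cstar_algebra A \<and>
     (let K = hm_carrier X; R = ca_carrier A; add = hm_add X; sm = hm_smult X;
          ra = hm_ract X; ip = hm_ip X; z = hm_zero X in
     z \<in> K \<and>
     (\<forall>x\<in>K. \<forall>y\<in>K. add x y \<in> K \<and> ip x y \<in> R) \<and>
     (\<forall>c. \<forall>x\<in>K. sm c x \<in> K) \<and> (\<forall>x\<in>K. \<forall>a\<in>R. ra x a \<in> K) \<and>
     \<comment> \<open>complex vector space\<close>
     (\<forall>x\<in>K. \<forall>y\<in>K. \<forall>w\<in>K. add (add x y) w = add x (add y w)) \<and>
     (\<forall>x\<in>K. \<forall>y\<in>K. add x y = add y x) \<and>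
     (\<forall>x\<in>K. add z x = x) \<and>
     (\<forall>x\<in>K. add x (sm (-1) x) = z) \<and>
     (\<forall>c d. \<forall>x\<in>K. sm (c + d) x = add (sm c x) (sm d x)) \<and>
     (\<forall>c. \<forall>x\<in>K. \<forall>y\<in>K. sm c (add x y) = add (sm c x) (sm c y)) \<and>
     (\<forall>c d. \<forall>x\<in>K. sm (c * d) x = sm c (sm d x)) \<and>
     (\<forall>x\<in>K. sm 1 x = x) \<and>
     \<comment> \<open>right A-module compatible with scalars\<close>
     (\<forall>x\<in>K. \<forall>a\<in>R. \<forall>b\<in>R. ra x (ca_mult A a b) = ra (ra x a) b) \<and>
     (\<forall>x\<in>K. \<forall>y\<in>K. \<forall>a\<in>R. ra (add x y) a = add (ra x a) (ra y a)) \<and>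
     (\<forall>x\<in>K. \<forall>a\<in>R. \<forall>b\<in>R. ra x (ca_add A a b) = add (ra x a) (ra x b)) \<and>
     (\<forall>c. \<forall>x\<in>K. \<forall>a\<in>R. ra (sm c x) a = sm c (ra x a) \<and> ra x (ca_smult A c a) = sm c (ra x a)) \<and>
     (\<forall>x\<in>K. ra x (ca_one A) = x) \<and>
     \<comment> \<open>A-valued inner product, linear in the second variable\<close>
     (\<forall>x\<in>K. \<forall>y\<in>K. \<forall>w\<in>K. ip x (add y w) = ca_add A (ip x y) (ip x w)) \<and>
     (\<forall>c. \<forall>x\<in>K. \<forall>y\<in>K. ip x (sm c y) = ca_smult A c (ip x y)) \<and>
     (\<forall>x\<in>K. \<forall>y\<in>K. \<forall>a\<in>R. ip x (ra y a) = ca_mult A (ip x y) a) \<and>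
     (\<forall>x\<in>K. \<forall>y\<in>K. ca_star A (ip x y) = ip y x) \<and>
     (\<forall>x\<in>K. \<exists>b\<in>R. ip x x = ca_mult A (ca_star A b) b) \<and>
     (\<forall>x\<in>K. ip x x = ca_zero A \<longrightarrow> x = z) \<and>
     \<comment> \<open>completeness w.r.t. the norm \<open>\<parallel>(x|x)\<parallel>^(1/2)\<close>\<close>
     (\<forall>f :: nat \<Rightarrow> _. (\<forall>n. f n \<in> K) \<and> (\<forall>\<epsilon>>0. \<exists>N. \<forall>m\<ge>N. \<forall>n\<ge>N. hm_norm A X (hm_diff X (f m) (f n)) < \<epsilon>)
          \<longrightarrow> (\<exists>l\<in>K. \<forall>\<epsilon>>0. \<exists>N. \<forall>n\<ge>N. hm_norm A X (hm_diff X (f n) l) < \<epsilon>)))"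

text \<open>The condition \<open>(\<phi>(a)x|y) = (x|\<phi>(a*)y)\<close> expresses that
  each \<open>\<phi>(a)\<close> is adjointable with adjoint \<open>\<phi>(a*)\<close> (so \<open>\<phi>\<close> is *-preserving).\<close>
definition hilbert_bimodule :: "'a calg \<Rightarrow> ('x, 'a) hmod \<Rightarrow> ('a \<Rightarrow> 'x \<Rightarrow> 'x) \<Rightarrow> bool" where
  "hilbert_bimodule A X \<phi> \<longleftrightarrow> right_hilbert_module A X \<and>
     (let K = hm_carrier X; R = ca_carrier A in
     (\<forall>a\<in>R. \<forall>x\<in>K. \<phi> a x \<in> K) \<and>
     (\<forall>a\<in>R. \<forall>x\<in>K. \<forall>y\<in>K. hm_ip X (\<phi> a x) y = hm_ip X x (\<phi> (ca_star A a) y)) \<and>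
     (\<forall>a\<in>R. \<forall>b\<in>R. \<forall>x\<in>K. \<phi> (ca_add A a b) x = hm_add X (\<phi> a x) (\<phi> b x)) \<and>
     (\<forall>c. \<forall>a\<in>R. \<forall>x\<in>K. \<phi> (ca_smult A c a) x = hm_smult X c (\<phi> a x)) \<and>
     (\<forall>a\<in>R. \<forall>b\<in>R. \<forall>x\<in>K. \<phi> (ca_mult A a b) x = \<phi> a (\<phi> b x)) \<and>
     (\<forall>a\<in>R. \<forall>b\<in>R. (\<forall>x\<in>K. \<phi> a x = \<phi> b x) \<longrightarrow> a = b))"

definition full_module :: "'a calg \<Rightarrow> ('x, 'a) hmod \<Rightarrow> bool" where
  "full_module A X \<longleftrightarrow>
     (\<forall>z\<in>ca_carrier A. \<forall>\<epsilon>>0. \<exists>l :: (complex \<times> 'x \<times> 'x) list.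
        (\<forall>(c, x, y)\<in>set l. x \<in> hm_carrier X \<and> y \<in> hm_carrier X) \<and>
        ca_norm A (ca_diff A z (ca_sum A (map (\<lambda>(c, x, y). ca_smult A c (hm_ip X x y)) l))) < \<epsilon>)"

definition is_basis :: "('x, 'a) hmod \<Rightarrow> 'x list \<Rightarrow> bool" where
  "is_basis X us \<longleftrightarrow> set us \<subseteq> hm_carrier X \<and>
     (\<forall>x\<in>hm_carrier X. x = hm_sum X (map (\<lambda>u. hm_ract X u (hm_ip X u x)) us))"

definition finite_projective :: "('x, 'a) hmod \<Rightarrow> bool" where
  "finite_projective X \<longleftrightarrow> (\<exists>us. is_basis X us)"

text \<open>\<open>OX\<close> is a unital C*-algebra containing a unital copy \<open>\<iota>(A)\<close> of A and
  elements \<open>S x\<close> satisfying the defining relations of \<open>O_X\<close> (w.r.t. the basis \<open>us\<close>).\<close>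
definition cp_relations ::
  "'a calg \<Rightarrow> ('x, 'a) hmod \<Rightarrow> ('a \<Rightarrow> 'x \<Rightarrow> 'x) \<Rightarrow> 'x list \<Rightarrow> 'o calg \<Rightarrow> ('a \<Rightarrow> 'o) \<Rightarrow> ('x \<Rightarrow> 'o) \<Rightarrow> bool" where
  "cp_relations A X \<phi> us OX \<iota> S \<longleftrightarrow> unital_cstar_algebra OX \<and>
     (let R = ca_carrier A; K = hm_carrier X in
     (\<forall>a\<in>R. \<iota> a \<in> ca_carrier OX) \<and>
     (\<forall>a\<in>R. \<forall>b\<in>R. \<iota> (ca_add A a b) = ca_add OX (\<iota> a) (\<iota> b)) \<and>
     (\<forall>c. \<forall>a\<in>R. \<iota> (ca_smult A c a) = ca_smult OX c (\<iota> a)) \<and>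
     (\<forall>a\<in>R. \<forall>b\<in>R. \<iota> (ca_mult A a b) = ca_mult OX (\<iota> a) (\<iota> b)) \<and>
     (\<forall>a\<in>R. \<iota> (ca_star A a) = ca_star OX (\<iota> a)) \<and>
     \<iota> (ca_one A) = ca_one OX \<and>
     (\<forall>x\<in>K. S x \<in> ca_carrier OX) \<and>
     (\<forall>x\<in>K. \<forall>y\<in>K. S (hm_add X x y) = ca_add OX (S x) (S y)) \<and>
     (\<forall>c. \<forall>x\<in>K. S (hm_smult X c x) = ca_smult OX c (S x)) \<and>
     (\<forall>x\<in>K. \<forall>a\<in>R. S (hm_ract X x a) = ca_mult OX (S x) (\<iota> a)) \<and>
     (\<forall>x\<in>K. \<forall>a\<in>R. S (\<phi> a x) = ca_mult OX (\<iota> a) (S x)) \<and>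
     (\<forall>x\<in>K. \<forall>y\<in>K. ca_mult OX (ca_star OX (S x)) (S y) = \<iota> (hm_ip X x y)) \<and>
     ca_sum OX (map (\<lambda>u. ca_mult OX (S u) (ca_star OX (S u))) us) = ca_one OX)"

definition commutant :: "'o calg \<Rightarrow> ('a \<Rightarrow> 'o) \<Rightarrow> 'a calg \<Rightarrow> 'o set" where
  "commutant OX \<iota> A = {T \<in> ca_carrier OX. \<forall>a\<in>ca_carrier A. ca_mult OX (\<iota> a) T = ca_mult OX T (\<iota> a)}"

definition sigma_map :: "'o calg \<Rightarrow> ('x \<Rightarrow> 'o) \<Rightarrow> 'x list \<Rightarrow> 'o \<Rightarrow> 'o" where
  "sigma_map OX S us T = ca_sum OX (map (\<lambda>u. ca_mult OX (ca_mult OX (S u) T) (ca_star OX (S u))) us)"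

end

theory Submission
  imports Defs
begin

text \<open>
  For \<open>T\<close> in the commutant of \<open>\<A>\<close>, the relations \<open>S\<^sub>x\<^sup>* S\<^sub>y = \<iota>(x|y)\<close> and the
  expansion \<open>S\<^sub>x\<^sup>* = \<Sum>\<^sub>i \<iota>(x|u\<^sub>i) S\<^sub>u\<^sub>i\<^sup>*\<close> give \<open>S\<^sub>x\<^sup>* \<sigma>(T) = T S\<^sub>x\<^sup>*\<close>, from which
  \<open>\<sigma>(T)\<sigma>(T') = \<Sum>\<^sub>i S\<^sub>u\<^sub>i T S\<^sub>u\<^sub>i\<^sup>* \<sigma>(T') = \<sigma>(T T')\<close>. If \<open>\<sigma>(T) = \<sigma>(T')\<close>, then
  \<open>T S\<^sub>x\<^sup>* = T' S\<^sub>x\<^sup>*\<close> for all \<open>x\<close>, hence \<open>T \<iota>(z) = T' \<iota>(z)\<close> for every \<open>z\<close> in the linear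
  span of the inner products; by fullness some such \<open>z\<close> lies within distance 1 of the unit,
  so it is right invertible by a Neumann series, and \<open>T = T'\<close>. For another basis \<open>v\<^sub>j\<close>,
  the element \<open>\<Sum>\<^sub>j S\<^sub>v\<^sub>j S\<^sub>v\<^sub>j\<^sup>*\<close> fixes every \<open>S\<^sub>x\<close>, hence fixes \<open>\<Sum>\<^sub>i S\<^sub>u\<^sub>i S\<^sub>u\<^sub>i\<^sup>* = 1\<close>
  and equals 1; therefore \<open>\<Sum>\<^sub>j S\<^sub>v\<^sub>j T S\<^sub>v\<^sub>j\<^sup>* = \<Sum>\<^sub>j S\<^sub>v\<^sub>j S\<^sub>v\<^sub>j\<^sup>* \<sigma>(T) = \<sigma>(T)\<close>.
\<close>

locale unital_cstar =
  fixes C :: "'a calg"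
  assumes axioms: "unital_cstar_algebra C"
begin

abbreviation carr where "carr \<equiv> ca_carrier C"
abbreviation add (infixl "\<oplus>" 65) where "x \<oplus> y \<equiv> ca_add C x y"
abbreviation diff (infixl "\<ominus>" 65) where "x \<ominus> y \<equiv> ca_diff C x y"
abbreviation mult (infixl "\<otimes>" 70) where "x \<otimes> y \<equiv> ca_mult C x y"
abbreviation smult (infixr "\<odot>" 75) where "c \<odot> x \<equiv> ca_smult C c x"
abbreviation adj where "adj x \<equiv> ca_star C x"
abbreviation nrm ("\<parallel>_\<parallel>") where "\<parallel>x\<parallel> \<equiv> ca_norm C x"
abbreviation zero ("\<zero>") where "\<zero> \<equiv> ca_zero C"
abbreviation one ("\<one>") where "\<one> \<equiv> ca_one C"
abbreviation lsum where "lsum f xs \<equiv> ca_sum C (map f xs)"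

lemma zero_closed [simp]: "\<zero> \<in> carr"
  and one_closed [simp]: "\<one> \<in> carr"
  and add_closed [simp]: "x \<in> carr \<Longrightarrow> y \<in> carr \<Longrightarrow> x \<oplus> y \<in> carr"
  and mult_closed [simp]: "x \<in> carr \<Longrightarrow> y \<in> carr \<Longrightarrow> x \<otimes> y \<in> carr"
  and smult_closed [simp]: "x \<in> carr \<Longrightarrow> c \<odot> x \<in> carr"
  and adj_closed [simp]: "x \<in> carr \<Longrightarrow> adj x \<in> carr"
  and add_assoc: "x \<in> carr \<Longrightarrow> y \<in> carr \<Longrightarrow> z \<in> carr \<Longrightarrow> x \<oplus> y \<oplus> z = x \<oplus> (y \<oplus> z)"
  and add_commute: "x \<in> carr \<Longrightarrow> y \<in> carr \<Longrightarrow> x \<oplus> y = y \<oplus> x"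
  and add_zero_left [simp]: "x \<in> carr \<Longrightarrow> \<zero> \<oplus> x = x"
  and add_minus_one: "x \<in> carr \<Longrightarrow> x \<oplus> (-1) \<odot> x = \<zero>"
  and smult_add_right: "x \<in> carr \<Longrightarrow> y \<in> carr \<Longrightarrow> c \<odot> (x \<oplus> y) = c \<odot> x \<oplus> c \<odot> y"
  and smult_smult: "x \<in> carr \<Longrightarrow> c \<odot> d \<odot> x = (c * d) \<odot> x"
  and smult_one [simp]: "x \<in> carr \<Longrightarrow> 1 \<odot> x = x"
  and mult_assoc: "x \<in> carr \<Longrightarrow> y \<in> carr \<Longrightarrow> z \<in> carr \<Longrightarrow> x \<otimes> y \<otimes> z = x \<otimes> (y \<otimes> z)"
  and distrib_left: "x \<in> carr \<Longrightarrow> y \<in> carr \<Longrightarrow> z \<in> carr \<Longrightarrow> x \<otimes> (y \<oplus> z) = x \<otimes> y \<oplus> x \<otimes> z"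
  and distrib_right: "x \<in> carr \<Longrightarrow> y \<in> carr \<Longrightarrow> z \<in> carr \<Longrightarrow> (x \<oplus> y) \<otimes> z = x \<otimes> z \<oplus> y \<otimes> z"
  and mult_smult_left: "x \<in> carr \<Longrightarrow> y \<in> carr \<Longrightarrow> (c \<odot> x) \<otimes> y = c \<odot> (x \<otimes> y)"
  and mult_smult_right: "x \<in> carr \<Longrightarrow> y \<in> carr \<Longrightarrow> x \<otimes> (c \<odot> y) = c \<odot> (x \<otimes> y)"
  and mult_one_left [simp]: "x \<in> carr \<Longrightarrow> \<one> \<otimes> x = x"
  and mult_one_right [simp]: "x \<in> carr \<Longrightarrow> x \<otimes> \<one> = x"
  and adj_adj [simp]: "x \<in> carr \<Longrightarrow> adj (adj x) = x"
  and adj_add: "x \<in> carr \<Longrightarrow> y \<in> carr \<Longrightarrow> adj (x \<oplus> y) = adj x \<oplus> adj y"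
  and adj_mult: "x \<in> carr \<Longrightarrow> y \<in> carr \<Longrightarrow> adj (x \<otimes> y) = adj y \<otimes> adj x"
  and norm_ge_zero: "x \<in> carr \<Longrightarrow> \<parallel>x\<parallel> \<ge> 0"
  and norm_eq_zero: "x \<in> carr \<Longrightarrow> \<parallel>x\<parallel> = 0 \<longleftrightarrow> x = \<zero>"
  and norm_triangle: "x \<in> carr \<Longrightarrow> y \<in> carr \<Longrightarrow> \<parallel>x \<oplus> y\<parallel> \<le> \<parallel>x\<parallel> + \<parallel>y\<parallel>"
  and norm_smult: "x \<in> carr \<Longrightarrow> \<parallel>c \<odot> x\<parallel> = cmod c * \<parallel>x\<parallel>"
  and norm_mult_le: "x \<in> carr \<Longrightarrow> y \<in> carr \<Longrightarrow> \<parallel>x \<otimes> y\<parallel> \<le> \<parallel>x\<parallel> * \<parallel>y\<parallel>"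
  using axioms unfolding unital_cstar_algebra_def Let_def by auto

lemma diff_closed [simp]: "x \<in> carr \<Longrightarrow> y \<in> carr \<Longrightarrow> x \<ominus> y \<in> carr"
  by (simp add: ca_diff_def)

lemma add_zero_right [simp]: "x \<in> carr \<Longrightarrow> x \<oplus> \<zero> = x"
  using add_commute[of x \<zero>] by simp

lemma idempotent_add_eq_zero:
  assumes "x \<in> carr" and "x \<oplus> x = x"
  shows "x = \<zero>"
proof -
  have "\<zero> = (x \<oplus> x) \<oplus> (-1) \<odot> x"
    using assms by (simp add: add_minus_one)
  also have "\<dots> = x"
    using assms(1) by (simp add: add_assoc add_minus_one)
  finally show ?thesis by simp
qed

lemma mult_zero_left [simp]: "x \<in> carr \<Longrightarrow> \<zero> \<otimes> x = \<zero>"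
  by (rule idempotent_add_eq_zero) (simp_all add: distrib_right[symmetric])

lemma mult_zero_right [simp]: "x \<in> carr \<Longrightarrow> x \<otimes> \<zero> = \<zero>"
  by (rule idempotent_add_eq_zero) (simp_all add: distrib_left[symmetric])

lemma smult_zero [simp]: "c \<odot> \<zero> = \<zero>"
  by (rule idempotent_add_eq_zero) (simp_all add: smult_add_right[symmetric])

lemma adj_zero [simp]: "adj \<zero> = \<zero>"
  by (rule idempotent_add_eq_zero) (simp_all add: adj_add[symmetric])

lemma ca_sum_Nil [simp]: "ca_sum C [] = \<zero>"
  and ca_sum_Cons [simp]: "ca_sum C (x # xs) = x \<oplus> ca_sum C xs"
  by (simp_all add: ca_sum_def)

lemma lsum_closed [simp]: "(\<And>x. x \<in> set xs \<Longrightarrow> f x \<in> carr) \<Longrightarrow> lsum f xs \<in> carr"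
  by (induction xs) auto

lemma lsum_cong: "(\<And>x. x \<in> set xs \<Longrightarrow> f x = g x) \<Longrightarrow> lsum f xs = lsum g xs"
  by (induction xs) auto

lemma add_add_swap:
  "w \<in> carr \<Longrightarrow> x \<in> carr \<Longrightarrow> y \<in> carr \<Longrightarrow> z \<in> carr \<Longrightarrow> (w \<oplus> x) \<oplus> (y \<oplus> z) = (w \<oplus> y) \<oplus> (x \<oplus> z)"
  by (metis add_assoc add_closed add_commute)

lemma lsum_add:
  "(\<And>x. x \<in> set xs \<Longrightarrow> f x \<in> carr) \<Longrightarrow> (\<And>x. x \<in> set xs \<Longrightarrow> g x \<in> carr) \<Longrightarrow>
    lsum (\<lambda>x. f x \<oplus> g x) xs = lsum f xs \<oplus> lsum g xs"
  by (induction xs) (auto simp: add_add_swap)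

lemma mult_lsum_left:
  "a \<in> carr \<Longrightarrow> (\<And>x. x \<in> set xs \<Longrightarrow> f x \<in> carr) \<Longrightarrow> a \<otimes> lsum f xs = lsum (\<lambda>x. a \<otimes> f x) xs"
  by (induction xs) (auto simp: distrib_left)

lemma mult_lsum_right:
  "a \<in> carr \<Longrightarrow> (\<And>x. x \<in> set xs \<Longrightarrow> f x \<in> carr) \<Longrightarrow> lsum f xs \<otimes> a = lsum (\<lambda>x. f x \<otimes> a) xs"
  by (induction xs) (auto simp: distrib_right)

lemma smult_lsum:
  "(\<And>x. x \<in> set xs \<Longrightarrow> f x \<in> carr) \<Longrightarrow> c \<odot> lsum f xs = lsum (\<lambda>x. c \<odot> f x) xs"
  by (induction xs) (auto simp: smult_add_right)

lemma adj_lsum: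
  "(\<And>x. x \<in> set xs \<Longrightarrow> f x \<in> carr) \<Longrightarrow> adj (lsum f xs) = lsum (\<lambda>x. adj (f x)) xs"
  by (induction xs) (auto simp: adj_add)

lemma diff_self [simp]: "x \<in> carr \<Longrightarrow> x \<ominus> x = \<zero>"
  by (simp add: ca_diff_def add_minus_one)

lemma add_diff_cancel [simp]: "x \<in> carr \<Longrightarrow> y \<in> carr \<Longrightarrow> (x \<oplus> y) \<ominus> y = x"
  by (simp add: ca_diff_def add_assoc add_minus_one)

lemma diff_add_cancel [simp]: "x \<in> carr \<Longrightarrow> y \<in> carr \<Longrightarrow> (x \<ominus> y) \<oplus> y = x"
  unfolding ca_diff_def by (metis add_assoc add_commute add_minus_one add_zero_right smult_closed)

lemma diff_add_diff: "x \<in> carr \<Longrightarrow> y \<in> carr \<Longrightarrow> z \<in> carr \<Longrightarrow> (x \<ominus> y) \<oplus> (y \<ominus> z) = x \<ominus> z"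
  unfolding ca_diff_def
  by (metis add_assoc add_closed add_commute add_minus_one add_zero_right smult_closed)

lemma diff_diff_cancel [simp]: "x \<in> carr \<Longrightarrow> y \<in> carr \<Longrightarrow> x \<ominus> (x \<ominus> y) = y"
  unfolding ca_diff_def
  by (simp add: smult_add_right smult_smult add_assoc[symmetric] add_minus_one)

lemma mult_diff_left: "x \<in> carr \<Longrightarrow> y \<in> carr \<Longrightarrow> z \<in> carr \<Longrightarrow> x \<otimes> (y \<ominus> z) = x \<otimes> y \<ominus> x \<otimes> z"
  by (simp add: ca_diff_def distrib_left mult_smult_right)

lemma mult_diff_right: "x \<in> carr \<Longrightarrow> y \<in> carr \<Longrightarrow> z \<in> carr \<Longrightarrow> (x \<ominus> y) \<otimes> z = x \<otimes> z \<ominus> y \<otimes> z"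
  by (simp add: ca_diff_def distrib_right mult_smult_left)

lemma norm_zero [simp]: "\<parallel>\<zero>\<parallel> = 0"
  using norm_eq_zero by simp

lemma norm_diff_commute: "x \<in> carr \<Longrightarrow> y \<in> carr \<Longrightarrow> \<parallel>x \<ominus> y\<parallel> = \<parallel>y \<ominus> x\<parallel>"
  using diff_diff_cancel norm_smult[of "y \<ominus> x" "-1"]
  by (simp add: ca_diff_def smult_add_right smult_smult add_commute)

lemma norm_diff_triangle: "x \<in> carr \<Longrightarrow> y \<in> carr \<Longrightarrow> z \<in> carr \<Longrightarrow> \<parallel>x \<ominus> z\<parallel> \<le> \<parallel>x \<ominus> y\<parallel> + \<parallel>y \<ominus> z\<parallel>"
  by (metis diff_add_diff diff_closed norm_triangle)

subsection \<open>Completeness and the Neumann series\<close>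

lemma cauchy_limit_exists:
  assumes "\<And>n. f n \<in> carr"
    and "\<And>\<epsilon>. \<epsilon> > 0 \<Longrightarrow> \<exists>N. \<forall>m\<ge>N. \<forall>n\<ge>N. \<parallel>f m \<ominus> f n\<parallel> < \<epsilon>"
  shows "\<exists>l\<in>carr. (\<lambda>n. \<parallel>f n \<ominus> l\<parallel>) \<longlonglongrightarrow> 0"
proof -
  have "\<exists>l\<in>carr. \<forall>\<epsilon>>0. \<exists>N. \<forall>n\<ge>N. \<parallel>f n \<ominus> l\<parallel> < \<epsilon>"
    using axioms assms unfolding unital_cstar_algebra_def Let_def by blast
  then show ?thesis
    by (simp add: LIMSEQ_iff norm_ge_zero assms(1) abs_of_nonneg)
qed

lemma eq_if_norm_diff_le_null:
  assumes "x \<in> carr" "y \<in> carr" and "g \<longlonglongrightarrow> 0" and "\<And>n. \<parallel>x \<ominus> y\<parallel> \<le> g n"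
  shows "x = y"
proof -
  have "\<parallel>x \<ominus> y\<parallel> \<le> 0"
    using assms(4) by (intro LIMSEQ_le_const[OF assms(3)]) auto
  then have "x \<ominus> y = \<zero>"
    using assms(1,2) norm_ge_zero norm_eq_zero by (meson antisym diff_closed)
  then show ?thesis
    using diff_add_cancel[of x y] assms(1,2) by simp
qed

lemma tail_bounded_limit_exists:
  assumes f: "\<And>n. f n \<in> carr" and t: "t \<longlonglongrightarrow> 0"
    and tail: "\<And>m n. n \<le> m \<Longrightarrow> \<parallel>f m \<ominus> f n\<parallel> \<le> t n"
  shows "\<exists>l\<in>carr. (\<lambda>n. \<parallel>f n \<ominus> l\<parallel>) \<longlonglongrightarrow> 0"
proof (rule cauchy_limit_exists[OF f])
  fix \<epsilon> :: real
  assume "\<epsilon> > 0"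
  then obtain N where N: "\<And>n. n \<ge> N \<Longrightarrow> t n < \<epsilon>"
    using LIMSEQ_D[OF t] by fastforce
  have "\<parallel>f m \<ominus> f n\<parallel> < \<epsilon>" if "m \<ge> N" "n \<ge> N" for m n
  proof (cases "n \<le> m")
    case True
    then show ?thesis using tail[OF True] N[OF \<open>n \<ge> N\<close>] by simp
  next
    case False
    then have "\<parallel>f n \<ominus> f m\<parallel> \<le> t m" by (intro tail) simp
    then show ?thesis using N[OF \<open>m \<ge> N\<close>] norm_diff_commute f by simp
  qed
  then show "\<exists>N. \<forall>m\<ge>N. \<forall>n\<ge>N. \<parallel>f m \<ominus> f n\<parallel> < \<epsilon>" by blast
qed

abbreviation partial_sum where "partial_sum p n \<equiv> lsum p (rev [0..<n])"

lemma partial_sums_converge_if_geometric_bound: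
  assumes p: "\<And>n. p n \<in> carr" and bound: "\<And>n. \<parallel>p n\<parallel> \<le> E * r ^ n"
    and r: "0 \<le> r" "r < 1"
  shows "\<exists>v\<in>carr. (\<lambda>n. \<parallel>partial_sum p n \<ominus> v\<parallel>) \<longlonglongrightarrow> 0"
proof -
  define t where "t n = E * r ^ n / (1 - r)" for n \<comment> \<open>\<open>E \<Sum>\<^sub>k\<^sub>\<ge>\<^sub>n r\<^sup>k\<close>, a bound for the tail\<close>
  have E: "E \<ge> 0" using bound[of 0] norm_ge_zero[OF p, of 0] by simp
  have tail: "\<parallel>partial_sum p m \<ominus> partial_sum p n\<parallel> \<le> t n - t m" if "n \<le> m" for m n
    using that
  proof (induction m rule: dec_induct)
    case base
    show ?case using p by simp
  next
    case (step m)
    have "\<parallel>partial_sum p (Suc m) \<ominus> partial_sum p n\<parallel>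
        \<le> \<parallel>partial_sum p (Suc m) \<ominus> partial_sum p m\<parallel> + \<parallel>partial_sum p m \<ominus> partial_sum p n\<parallel>"
      using p by (intro norm_diff_triangle) simp_all
    also have "\<dots> \<le> E * r ^ m + (t n - t m)"
      using bound[of m] step.IH p by simp
    also have "E * r ^ m = t m - t (Suc m)"
      using r by (simp add: t_def diff_divide_distrib[symmetric] eq_divide_eq algebra_simps)
    finally show ?case by simp
  qed
  have t_nonneg: "t m \<ge> 0" for m
    using r E unfolding t_def by (intro divide_nonneg_nonneg mult_nonneg_nonneg) simp_all
  have "\<parallel>partial_sum p m \<ominus> partial_sum p n\<parallel> \<le> t n" if "n \<le> m" for m n
    using tail[OF that] t_nonneg[of m] by linarith
  moreover have "t \<longlonglongrightarrow> 0"
    unfolding t_def using LIMSEQ_realpow_zero[OF r] by (intro tendsto_divide_zero tendsto_mult_right_zero)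
  ultimately show ?thesis
    using p by (intro tail_bounded_limit_exists) simp_all
qed

lemma neumann_series_right_inverse:
  assumes w: "w \<in> carr" and small: "\<parallel>w\<parallel> < 1"
  shows "\<exists>v\<in>carr. (\<one> \<ominus> w) \<otimes> v = \<one>"
proof -
  define p where "p n = ((\<lambda>x. w \<otimes> x) ^^ n) \<one>" for n
  define z where "z = \<one> \<ominus> w"
  have z [simp]: "z \<in> carr" using w by (simp add: z_def)
  have p_Suc: "p (Suc n) = w \<otimes> p n" for n by (simp add: p_def)
  have p_closed [simp]: "p n \<in> carr" for n by (induction n) (simp_all add: p_def w)
  have p_norm: "\<parallel>p n\<parallel> \<le> \<parallel>\<one>\<parallel> * \<parallel>w\<parallel> ^ n" for n
  proof (induction n)
    case 0
    show ?case by (simp add: p_def)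
  next
    case (Suc n)
    have "\<parallel>p (Suc n)\<parallel> \<le> \<parallel>w\<parallel> * \<parallel>p n\<parallel>" using norm_mult_le w by (simp add: p_Suc)
    also have "\<dots> \<le> \<parallel>w\<parallel> * (\<parallel>\<one>\<parallel> * \<parallel>w\<parallel> ^ n)" using Suc norm_ge_zero[OF w] by (simp add: mult_left_mono)
    finally show ?case by (simp add: algebra_simps)
  qed
  obtain v where v: "v \<in> carr" and lim: "(\<lambda>n. \<parallel>partial_sum p n \<ominus> v\<parallel>) \<longlonglongrightarrow> 0"
    using partial_sums_converge_if_geometric_bound[OF p_closed p_norm norm_ge_zero[OF w] small] by blast
  have telescope: "z \<otimes> partial_sum p n = \<one> \<ominus> p n" for n
  proof (induction n)
    case 0
    show ?case by (simp add: p_def)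
  next
    case (Suc n)
    have "z \<otimes> partial_sum p (Suc n) = (\<one> \<ominus> p n) \<oplus> z \<otimes> p n"
      using Suc by (simp add: distrib_left add_commute[of "z \<otimes> p n"])
    also have "z \<otimes> p n = p n \<ominus> p (Suc n)"
      using w by (simp add: z_def mult_diff_right p_Suc)
    finally show ?case by (simp add: diff_add_diff)
  qed
  have "\<parallel>\<one> \<ominus> z \<otimes> v\<parallel> \<le> \<parallel>\<one>\<parallel> * \<parallel>w\<parallel> ^ n + \<parallel>z\<parallel> * \<parallel>partial_sum p n \<ominus> v\<parallel>" for n
  proof -
    have "\<parallel>\<one> \<ominus> z \<otimes> v\<parallel> \<le> \<parallel>\<one> \<ominus> z \<otimes> partial_sum p n\<parallel> + \<parallel>z \<otimes> partial_sum p n \<ominus> z \<otimes> v\<parallel>"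
      using v by (intro norm_diff_triangle) simp_all
    also have "\<parallel>z \<otimes> partial_sum p n \<ominus> z \<otimes> v\<parallel> \<le> \<parallel>z\<parallel> * \<parallel>partial_sum p n \<ominus> v\<parallel>"
      using v by (simp add: mult_diff_left[symmetric] norm_mult_le)
    finally show ?thesis using p_norm[of n] by (simp add: telescope)
  qed
  moreover have "(\<lambda>n. \<parallel>\<one>\<parallel> * \<parallel>w\<parallel> ^ n + \<parallel>z\<parallel> * \<parallel>partial_sum p n \<ominus> v\<parallel>) \<longlonglongrightarrow> 0"
    using norm_ge_zero[OF w] small lim
    by (intro tendsto_add_zero tendsto_mult_right_zero LIMSEQ_realpow_zero)
  ultimately have "\<one> = z \<otimes> v"
    using v by (intro eq_if_norm_diff_le_null) simp_all
  then show ?thesis using v unfolding z_def by metis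
qed

end

inductive_set inner_product_span :: "'a calg \<Rightarrow> ('x, 'a) hmod \<Rightarrow> 'a set"
  for A :: "'a calg" and X :: "('x, 'a) hmod" where
  zero: "ca_zero A \<in> inner_product_span A X"
| add_inner: "x \<in> hm_carrier X \<Longrightarrow> y \<in> hm_carrier X \<Longrightarrow> z \<in> inner_product_span A X \<Longrightarrow>
    ca_add A (ca_smult A c (hm_ip X x y)) z \<in> inner_product_span A X"

locale right_hilbert =
  fixes A :: "'a calg" and X :: "('x, 'a) hmod"
  assumes module: "right_hilbert_module A X"
begin

sublocale A: unital_cstar A
  using module unfolding right_hilbert_module_def unital_cstar_def by simp

abbreviation vec where "vec \<equiv> hm_carrier X"
abbreviation ip where "ip x y \<equiv> hm_ip X x y"

lemma hm_zero_closed [simp]: "hm_zero X \<in> vec"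
  and hm_add_closed [simp]: "x \<in> vec \<Longrightarrow> y \<in> vec \<Longrightarrow> hm_add X x y \<in> vec"
  and ract_closed [simp]: "x \<in> vec \<Longrightarrow> a \<in> A.carr \<Longrightarrow> hm_ract X x a \<in> vec"
  and ip_closed [simp]: "x \<in> vec \<Longrightarrow> y \<in> vec \<Longrightarrow> ip x y \<in> A.carr"
  and adj_ip: "x \<in> vec \<Longrightarrow> y \<in> vec \<Longrightarrow> A.adj (ip x y) = ip y x"
  using module unfolding right_hilbert_module_def Let_def by auto

lemma hm_add_zero_left [simp]: "x \<in> vec \<Longrightarrow> hm_add X (hm_zero X) x = x"
  using module unfolding right_hilbert_module_def Let_def by (elim conjE) fast

lemma hm_sum_Nil [simp]: "hm_sum X [] = hm_zero X"
  and hm_sum_Cons [simp]: "hm_sum X (x # xs) = hm_add X x (hm_sum X xs)"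
  by (simp_all add: hm_sum_def)

lemma hm_sum_closed [simp]: "set xs \<subseteq> vec \<Longrightarrow> hm_sum X xs \<in> vec"
  by (induction xs) auto

lemma inner_product_span_subset: "inner_product_span A X \<subseteq> A.carr"
proof
  fix z
  assume "z \<in> inner_product_span A X"
  then show "z \<in> A.carr" by induction simp_all
qed

lemma full_module_inner_product_span_invertible:
  assumes "full_module A X"
  shows "\<exists>z\<in>inner_product_span A X. \<exists>v\<in>A.carr. A.mult z v = A.one"
proof -
  let ?f = "\<lambda>(c, x, y). A.smult c (ip x y)"
  obtain l where l: "\<forall>(c, x, y)\<in>set l. x \<in> vec \<and> y \<in> vec"
    and close: "A.nrm (A.diff A.one (A.lsum ?f l)) < 1"
    using assms unfolding full_module_def by (metis A.one_closed zero_less_one)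
  have span: "A.lsum ?f l \<in> inner_product_span A X"
    using l by (induction l) (auto intro: inner_product_span.intros)
  then have "A.lsum ?f l \<in> A.carr"
    using inner_product_span_subset by blast
  then obtain v where "v \<in> A.carr" "A.mult (A.lsum ?f l) v = A.one"
    using A.neumann_series_right_inverse[of "A.diff A.one (A.lsum ?f l)"] close by auto
  then show ?thesis using span by blast
qed

end

section \<open>The map \<open>\<sigma>\<close> on the Cuntz-Pimsner algebra\<close>

text \<open>The left action \<open>\<phi>\<close> enters only through \<open>cp_relations\<close>; none of its properties are needed.\<close>

locale cuntz_pimsner = right_hilbert A X
  for A :: "'a calg" and X :: "('x, 'a) hmod" +
  fixes \<phi> :: "'a \<Rightarrow> 'x \<Rightarrow> 'x" and us :: "'x list" and OX :: "'o calg"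
    and \<iota> :: "'a \<Rightarrow> 'o" and S :: "'x \<Rightarrow> 'o"
  assumes basis: "is_basis X us"
    and relations: "cp_relations A X \<phi> us OX \<iota> S"
begin

sublocale O: unital_cstar OX
  using relations unfolding cp_relations_def unital_cstar_def by simp

text \<open>Interpretations do not inherit mixfix syntax, so the notation is declared again for \<open>OX\<close>.\<close>

abbreviation oadd (infixl "\<oplus>" 65) where "x \<oplus> y \<equiv> ca_add OX x y"
abbreviation omult (infixl "\<otimes>" 70) where "x \<otimes> y \<equiv> ca_mult OX x y"
abbreviation osmult (infixr "\<odot>" 75) where "c \<odot> x \<equiv> ca_smult OX c x"
abbreviation ozero ("\<zero>") where "\<zero> \<equiv> ca_zero OX"
abbreviation oone ("\<one>") where "\<one> \<equiv> ca_one OX"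
abbreviation \<sigma> where "\<sigma> \<equiv> sigma_map OX S us"

lemma iota_closed [simp]: "a \<in> A.carr \<Longrightarrow> \<iota> a \<in> O.carr"
  and iota_add: "a \<in> A.carr \<Longrightarrow> b \<in> A.carr \<Longrightarrow> \<iota> (A.add a b) = \<iota> a \<oplus> \<iota> b"
  and iota_smult: "a \<in> A.carr \<Longrightarrow> \<iota> (A.smult c a) = c \<odot> \<iota> a"
  and iota_mult: "a \<in> A.carr \<Longrightarrow> b \<in> A.carr \<Longrightarrow> \<iota> (A.mult a b) = \<iota> a \<otimes> \<iota> b"
  and iota_adj: "a \<in> A.carr \<Longrightarrow> \<iota> (A.adj a) = O.adj (\<iota> a)"
  and iota_one [simp]: "\<iota> A.one = \<one>"
  and S_closed [simp]: "x \<in> vec \<Longrightarrow> S x \<in> O.carr"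
  and S_add: "x \<in> vec \<Longrightarrow> y \<in> vec \<Longrightarrow> S (hm_add X x y) = S x \<oplus> S y"
  and S_ract: "x \<in> vec \<Longrightarrow> a \<in> A.carr \<Longrightarrow> S (hm_ract X x a) = S x \<otimes> \<iota> a"
  and adj_S_mult_S: "x \<in> vec \<Longrightarrow> y \<in> vec \<Longrightarrow> O.adj (S x) \<otimes> S y = \<iota> (ip x y)"
  and sum_S_mult_adj_S: "O.lsum (\<lambda>u. S u \<otimes> O.adj (S u)) us = \<one>"
  using relations unfolding cp_relations_def Let_def by auto

lemma basis_subset: "is_basis X bs \<Longrightarrow> set bs \<subseteq> vec"
  by (simp add: is_basis_def)

lemma iota_zero [simp]: "\<iota> A.zero = \<zero>"
  using iota_add[of A.zero A.zero] by (intro O.idempotent_add_eq_zero) simp_all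

lemma S_zero [simp]: "S (hm_zero X) = \<zero>"
  using S_add[of "hm_zero X" "hm_zero X"] by (intro O.idempotent_add_eq_zero) simp_all

lemma S_hm_sum: "set xs \<subseteq> vec \<Longrightarrow> S (hm_sum X xs) = O.lsum S xs"
  by (induction xs) (simp_all add: S_add)

lemma S_basis_expansion:
  assumes bs: "is_basis X bs" and x: "x \<in> vec"
  shows "S x = O.lsum (\<lambda>b. S b \<otimes> \<iota> (ip b x)) bs"
proof -
  have "S x = S (hm_sum X (map (\<lambda>b. hm_ract X b (ip b x)) bs))"
    using bs x unfolding is_basis_def by metis
  also have "\<dots> = O.lsum (\<lambda>b. S (hm_ract X b (ip b x))) bs"
    using basis_subset[OF bs] x by (subst S_hm_sum) (auto simp: comp_def)
  also have "\<dots> = O.lsum (\<lambda>b. S b \<otimes> \<iota> (ip b x)) bs"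
    using basis_subset[OF bs] x by (intro O.lsum_cong) (auto simp: S_ract)
  finally show ?thesis .
qed

lemma adj_S_basis_expansion:
  assumes bs: "is_basis X bs" and x: "x \<in> vec"
  shows "O.adj (S x) = O.lsum (\<lambda>b. \<iota> (ip x b) \<otimes> O.adj (S b)) bs"
proof -
  have "O.adj (S x) = O.lsum (\<lambda>b. O.adj (S b \<otimes> \<iota> (ip b x))) bs"
    using basis_subset[OF bs] x by (subst S_basis_expansion[OF bs x]) (auto intro!: O.adj_lsum)
  also have "\<dots> = O.lsum (\<lambda>b. \<iota> (ip x b) \<otimes> O.adj (S b)) bs"
    using basis_subset[OF bs] x
    by (intro O.lsum_cong) (auto simp: O.adj_mult iota_adj[symmetric] adj_ip)
  finally show ?thesis .
qed

lemma commutant_closed: "T \<in> commutant OX \<iota> A \<Longrightarrow> T \<in> O.carr"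
  and commutant_commute: "T \<in> commutant OX \<iota> A \<Longrightarrow> a \<in> A.carr \<Longrightarrow> \<iota> a \<otimes> T = T \<otimes> \<iota> a"
  by (simp_all add: commutant_def)

lemma sigma_closed: "T \<in> O.carr \<Longrightarrow> \<sigma> T \<in> O.carr"
  unfolding sigma_map_def using basis_subset[OF basis] by (intro O.lsum_closed) auto

lemma sigma_add: "T \<in> O.carr \<Longrightarrow> T' \<in> O.carr \<Longrightarrow> \<sigma> (T \<oplus> T') = \<sigma> T \<oplus> \<sigma> T'"
  unfolding sigma_map_def using basis_subset[OF basis]
  by (subst O.lsum_add[symmetric]) (auto intro!: O.lsum_cong simp: O.distrib_left O.distrib_right)

lemma sigma_smult: "T \<in> O.carr \<Longrightarrow> \<sigma> (c \<odot> T) = c \<odot> \<sigma> T"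
  unfolding sigma_map_def using basis_subset[OF basis]
  by (subst O.smult_lsum) (auto intro!: O.lsum_cong simp: O.mult_smult_left O.mult_smult_right)

lemma sigma_adj: "T \<in> O.carr \<Longrightarrow> \<sigma> (O.adj T) = O.adj (\<sigma> T)"
  unfolding sigma_map_def using basis_subset[OF basis]
  by (subst O.adj_lsum) (auto intro!: O.lsum_cong simp: O.adj_mult O.mult_assoc)

lemma sigma_one: "\<sigma> \<one> = \<one>"
proof -
  have "\<sigma> \<one> = O.lsum (\<lambda>u. S u \<otimes> O.adj (S u)) us"
    unfolding sigma_map_def using basis_subset[OF basis] by (intro O.lsum_cong) auto
  then show ?thesis by (simp add: sum_S_mult_adj_S)
qed

lemma adj_S_mult_sigma:
  assumes T: "T \<in> commutant OX \<iota> A" and x: "x \<in> vec"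
  shows "O.adj (S x) \<otimes> \<sigma> T = T \<otimes> O.adj (S x)"
proof -
  have T_closed: "T \<in> O.carr" using T by (rule commutant_closed)
  have "O.adj (S x) \<otimes> \<sigma> T = O.lsum (\<lambda>u. O.adj (S x) \<otimes> S u \<otimes> T \<otimes> O.adj (S u)) us"
    unfolding sigma_map_def using basis_subset[OF basis] x T_closed
    by (subst O.mult_lsum_left) (auto intro!: O.lsum_cong simp: O.mult_assoc)
  also have "\<dots> = O.lsum (\<lambda>u. T \<otimes> (\<iota> (ip x u) \<otimes> O.adj (S u))) us"
  proof (rule O.lsum_cong)
    fix u
    assume "u \<in> set us"
    then have u: "u \<in> vec" using basis_subset[OF basis] by auto
    have "O.adj (S x) \<otimes> S u \<otimes> T \<otimes> O.adj (S u) = \<iota> (ip x u) \<otimes> T \<otimes> O.adj (S u)"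
      using x u by (simp add: adj_S_mult_S)
    also have "\<dots> = T \<otimes> (\<iota> (ip x u) \<otimes> O.adj (S u))"
      using x u T_closed by (subst commutant_commute[OF T]) (simp_all add: O.mult_assoc)
    finally show "O.adj (S x) \<otimes> S u \<otimes> T \<otimes> O.adj (S u) = T \<otimes> (\<iota> (ip x u) \<otimes> O.adj (S u))" .
  qed
  also have "\<dots> = T \<otimes> O.adj (S x)"
    using basis_subset[OF basis] x T_closed
    by (simp add: O.mult_lsum_left[symmetric] subset_iff adj_S_basis_expansion[OF basis x])
  finally show ?thesis .
qed

lemma sigma_mult:
  assumes T: "T \<in> O.carr" and T': "T' \<in> commutant OX \<iota> A"
  shows "\<sigma> (T \<otimes> T') = \<sigma> T \<otimes> \<sigma> T'"
proof -
  have T'_closed: "T' \<in> O.carr" using T' by (rule commutant_closed)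
  have "\<sigma> T \<otimes> \<sigma> T' = O.lsum (\<lambda>u. S u \<otimes> T \<otimes> (O.adj (S u) \<otimes> \<sigma> T')) us"
    unfolding sigma_map_def[of _ _ _ T] using basis_subset[OF basis] T sigma_closed[OF T'_closed]
    by (subst O.mult_lsum_right) (auto intro!: O.lsum_cong simp: O.mult_assoc)
  also have "\<dots> = \<sigma> (T \<otimes> T')"
    unfolding sigma_map_def[of _ _ _ "T \<otimes> T'"] using basis_subset[OF basis] T T'_closed
    by (intro O.lsum_cong) (auto simp: adj_S_mult_sigma[OF T'] O.mult_assoc)
  finally show ?thesis by simp
qed

lemma sum_S_mult_adj_S_basis:
  assumes bs: "is_basis X bs"
  shows "O.lsum (\<lambda>b. S b \<otimes> O.adj (S b)) bs = \<one>"
proof -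
  define P where "P = O.lsum (\<lambda>b. S b \<otimes> O.adj (S b)) bs"
  have P_closed: "P \<in> O.carr"
    unfolding P_def using basis_subset[OF bs] by (intro O.lsum_closed) auto
  have P_S: "P \<otimes> S x = S x" if x: "x \<in> vec" for x
  proof -
    have "P \<otimes> S x = O.lsum (\<lambda>b. S b \<otimes> (O.adj (S b) \<otimes> S x)) bs"
      unfolding P_def using basis_subset[OF bs] x
      by (subst O.mult_lsum_right) (auto intro!: O.lsum_cong simp: O.mult_assoc)
    also have "\<dots> = S x"
      using basis_subset[OF bs] x
      by (subst S_basis_expansion[OF bs x]) (auto intro!: O.lsum_cong simp: adj_S_mult_S)
    finally show ?thesis .
  qed
  have "P = P \<otimes> O.lsum (\<lambda>u. S u \<otimes> O.adj (S u)) us"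
    using P_closed by (simp add: sum_S_mult_adj_S)
  also have "\<dots> = O.lsum (\<lambda>u. S u \<otimes> O.adj (S u)) us"
    using basis_subset[OF basis] P_closed
    by (subst O.mult_lsum_left) (auto intro!: O.lsum_cong simp: O.mult_assoc[symmetric] P_S)
  finally show ?thesis
    using sum_S_mult_adj_S by (simp add: P_def)
qed

lemma sigma_basis_independent:
  assumes bs: "is_basis X bs" and T: "T \<in> commutant OX \<iota> A"
  shows "sigma_map OX S bs T = \<sigma> T"
proof -
  have T_closed: "T \<in> O.carr" using T by (rule commutant_closed)
  have "sigma_map OX S bs T = O.lsum (\<lambda>b. S b \<otimes> O.adj (S b) \<otimes> \<sigma> T) bs"
    unfolding sigma_map_def[of _ _ bs] using basis_subset[OF bs] T_closed sigma_closed[OF T_closed]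
    by (intro O.lsum_cong) (auto simp: O.mult_assoc adj_S_mult_sigma[OF T])
  also have "\<dots> = \<sigma> T"
    using basis_subset[OF bs] sigma_closed[OF T_closed]
    by (subst O.mult_lsum_right[symmetric]) (auto simp: sum_S_mult_adj_S_basis[OF bs])
  finally show ?thesis .
qed

lemma mult_iota_eq_on_inner_product_span:
  assumes T: "T \<in> O.carr" "T' \<in> O.carr"
    and eq: "\<And>x. x \<in> vec \<Longrightarrow> T \<otimes> O.adj (S x) = T' \<otimes> O.adj (S x)"
    and z: "z \<in> inner_product_span A X"
  shows "T \<otimes> \<iota> z = T' \<otimes> \<iota> z"
  using z
proof induction
  case zero
  show ?case using T by simp
next
  case (add_inner x y z c)
  have z: "z \<in> A.carr" using add_inner.hyps(3) inner_product_span_subset by blast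
  have "T \<otimes> \<iota> (ip x y) = T' \<otimes> \<iota> (ip x y)"
    using eq[OF add_inner.hyps(1)] add_inner.hyps(1,2) T
    by (simp add: adj_S_mult_S[symmetric] O.mult_assoc[symmetric])
  then show ?case
    using add_inner.hyps(1,2) add_inner.IH z T
    by (simp add: iota_add iota_smult O.distrib_left O.mult_smult_right)
qed

lemma eq_if_mult_adj_S_eq:
  assumes full: "full_module A X" and T: "T \<in> O.carr" "T' \<in> O.carr"
    and eq: "\<And>x. x \<in> vec \<Longrightarrow> T \<otimes> O.adj (S x) = T' \<otimes> O.adj (S x)"
  shows "T = T'"
proof -
  obtain z v where z: "z \<in> inner_product_span A X" and v: "v \<in> A.carr" and zv: "A.mult z v = A.one"
    using full_module_inner_product_span_invertible[OF full] by blast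
  have z_closed: "z \<in> A.carr" using z inner_product_span_subset by blast
  have "T = T \<otimes> \<iota> z \<otimes> \<iota> v"
    using zv z_closed v T by (simp add: O.mult_assoc iota_mult[symmetric])
  also have "\<dots> = T' \<otimes> \<iota> z \<otimes> \<iota> v"
    using mult_iota_eq_on_inner_product_span[OF T eq z] by simp
  also have "\<dots> = T'"
    using zv z_closed v T by (simp add: O.mult_assoc iota_mult[symmetric])
  finally show ?thesis .
qed

lemma sigma_inj_on_commutant:
  assumes full: "full_module A X"
  shows "inj_on \<sigma> (commutant OX \<iota> A)"
proof (rule inj_onI)
  fix T T'
  assume T: "T \<in> commutant OX \<iota> A" and T': "T' \<in> commutant OX \<iota> A" and "\<sigma> T = \<sigma> T'"
  then have "T \<otimes> O.adj (S x) = T' \<otimes> O.adj (S x)" if "x \<in> vec" for x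
    using adj_S_mult_sigma[OF T that] adj_S_mult_sigma[OF T' that] by simp
  then show "T = T'"
    using eq_if_mult_adj_S_eq[OF full] commutant_closed[OF T] commutant_closed[OF T'] by blast
qed

end

theorem lemma3p1:
  fixes A :: "'a calg" and X :: "('x, 'a) hmod" and \<phi> :: "'a \<Rightarrow> 'x \<Rightarrow> 'x"
    and us :: "'x list" and OX :: "'o calg" and \<iota> :: "'a \<Rightarrow> 'o" and S :: "'x \<Rightarrow> 'o"
  assumes "hilbert_bimodule A X \<phi>"
    and "full_module A X"
    and "finite_projective X"
    and "is_basis X us"
    and "cp_relations A X \<phi> us OX \<iota> S"
  shows "(\<forall>T\<in>commutant OX \<iota> A. sigma_map OX S us T \<in> ca_carrier OX)
    \<and> (\<forall>T\<in>commutant OX \<iota> A. \<forall>T'\<in>commutant OX \<iota> A.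
          sigma_map OX S us (ca_add OX T T') = ca_add OX (sigma_map OX S us T) (sigma_map OX S us T')
        \<and> sigma_map OX S us (ca_mult OX T T') = ca_mult OX (sigma_map OX S us T) (sigma_map OX S us T'))
    \<and> (\<forall>c. \<forall>T\<in>commutant OX \<iota> A. sigma_map OX S us (ca_smult OX c T) = ca_smult OX c (sigma_map OX S us T))
    \<and> (\<forall>T\<in>commutant OX \<iota> A. sigma_map OX S us (ca_star OX T) = ca_star OX (sigma_map OX S us T))
    \<and> sigma_map OX S us (ca_one OX) = ca_one OX
    \<and> inj_on (sigma_map OX S us) (commutant OX \<iota> A)
    \<and> (\<forall>vs. is_basis X vs \<longrightarrow> (\<forall>T\<in>commutant OX \<iota> A. sigma_map OX S vs T = sigma_map OX S us T))"
proof -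
  have "right_hilbert_module A X"
    using assms(1) by (simp add: hilbert_bimodule_def)
  then interpret cuntz_pimsner A X \<phi> us OX \<iota> S
    using assms(4,5) by (intro cuntz_pimsner.intro right_hilbert.intro cuntz_pimsner_axioms.intro)
  show ?thesis
    using sigma_inj_on_commutant[OF assms(2)]
    by (simp add: commutant_closed sigma_closed sigma_add sigma_mult sigma_smult sigma_adj sigma_one
        sigma_basis_independent)
qed

end
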